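(* Let $(H,m_H,\delta,\epsilon)$ be a commutative bialgebra with unit $1_H$, let $q\in\{\theta,\mathrm r,\ell\}$ ($\theta\in\mathbb{K}$), and consider the free commutative $\mathbf R_q$-algebra $(T^+(H),\bar\bullet^q,P_H)$ with $i_H(h)=h\otimes1_{\mathbb{K}}$. Let $\Delta:T^+(H)\to T^+(H)^{\otimes2}$ be the unique $\mathbf R_q$-algebra morphism (target equipped with the operator $P_H\otimes\mathrm{id}$) with $\Delta(i_H(h))=\sum i_H(h_{(1)})\otimes i_H(h_{(2)})$, and let $\tilde\epsilon:T^+(H)\to\mathbb{K}$ be the unique $\mathbf R_q$-algebra morphism with $\tilde\epsilon\circ i_H=\epsilon$, where $\mathbb{K}$ carries the operator $-\theta\,\mathrm{id}_{\mathbb{K}}$ if $q=\theta$ and $\mathrm{id}_{\mathbb{K}}$ if $q\in\{\mathrm r,\ell\}$. Then $\Delta$ is coassociative and $(\mathrm{id}\otimes\tilde\epsilon)\Delta=\mathrm{id}_{T^+(H)}$; hence $(T^+(H),\bar\bullet^q,P_H,\Delta,\tilde\epsilon)$ is a right $\mathbf R_q$-bialgebra.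
   Context: $\mathbb{K}$ is a field of characteristic $0$; $\delta(h)=\sum h_{(1)}\otimes h_{(2)}$ (Sweedler notation). For a unital commutative algebra $A$ with product $[a;b]$: $T(A)=\bigoplus_{n\ge0}A^{\otimes n}$, $A^{\otimes0}=\mathbb{K}1_{\mathbb{K}}$, $a\otimes1_{\mathbb{K}}$ identified with $a$; for $q\in\{\theta,\mathrm r,\ell\}$, $\bullet^q$ is bilinear with $k1_{\mathbb{K}}\bullet^qU=kU=U\bullet^qk1_{\mathbb{K}}$ and $(a\otimes U)\bullet^q(b\otimes V)=a\otimes(U\bullet^q(b\otimes V))+b\otimes((a\otimes U)\bullet^qV)+M_q$ with $M_\theta=\theta[a;b]\otimes(U\bullet^\theta V)$, $M_{\mathrm r}=-1_A\otimes[a;b]\otimes(U\bullet^{\mathrm r}V)$, $M_\ell=-[a;b]\otimes1_A\otimes(U\bullet^\ell V)$. $T^+(A)=A\otimes T(A)$ with $(a\otimes U)\bar\bullet^q(b\otimes V)=[a;b]\otimes(U\bullet^qV)$, unit $1_A\otimes1_{\mathbb{K}}$, and $P_A(a_1\otimes\cdots\otimes a_n)=1_A\otimes a_1\otimes\cdots\otimes a_n$. $\mathbf R_\theta$-algebras are Rota--Baxter algebras of scalar weight $\theta$ ($P(x)P(y)=P(P(x)y+xP(y))+\theta P(xy)$), $\mathbf R_{\mathrm r}$-algebras are Nijenhuis algebras ($P(x)P(y)=P(P(x)y+xP(y))-P^2(xy)$), $\mathbf R_\ell$-algebras are $TD$-algebras ($P(x)P(y)=P(P(x)y+xP(y))-P(xP(1)y)$);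 morphisms are unital algebra homomorphisms intertwining the operators. Known fact used as background: $(T^+(A),\bar\bullet^q,P_A)$ with $i_A$ is the free unital commutative $\mathbf R_q$-algebra over $A$. If $(B,P)$ is an $\mathbf R_q$-algebra then $B^{\otimes n}$ with componentwise product and operator $P\otimes\mathrm{id}_B^{\otimes(n-1)}$ is an $\mathbf R_q$-algebra. A right $\mathbf R_q$-bialgebra is an $\mathbf R_q$-algebra $(B,P)$ with a coassociative coproduct $\Delta:B\to B\otimes B$ and a right counit $\epsilon:B\to\mathbb{K}$ (i.e. $(\mathrm{id}_B\otimes\epsilon)\Delta=\mathrm{id}_B$), both being $\mathbf R_q$-algebra morphisms (with $B\otimes B$ carrying $P\otimes\mathrm{id}$ and $\mathbb{K}$ carrying $-\theta\,\mathrm{id}$ resp. $\mathrm{id}$). *)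

theory Defs
  imports "HOL-Library.Poly_Mapping"
begin

(* Vector spaces over the field 'k are represented by a chosen basis:
  a vector with basis 'a is a finitely supported function  'a \<Rightarrow>\<^sub>0 'k.
  Linear maps are given by their values on basis elements, so they are
  linear by construction. The tensor product of spaces with bases 'a and 'c
  has basis 'a \<times> 'c. *)

definition smul :: "'k::field \<Rightarrow> ('a \<Rightarrow>\<^sub>0 'k) \<Rightarrow> ('a \<Rightarrow>\<^sub>0 'k)" where
  "smul c p = Poly_Mapping.map (\<lambda>v. c * v) p"

definition vec :: "'a \<Rightarrow> ('a \<Rightarrow>\<^sub>0 'k::field)" where
  "vec a = Poly_Mapping.single a 1"

definition lin :: "('a \<Rightarrow> ('c \<Rightarrow>\<^sub>0 'k::field)) \<Rightarrow> ('a \<Rightarrow>\<^sub>0 'k) \<Rightarrow> ('c \<Rightarrow>\<^sub>0 'k)" where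
  "lin f x = (\<Sum>a\<in>Poly_Mapping.keys x. smul (Poly_Mapping.lookup x a) (f a))"

definition linK :: "('a \<Rightarrow> 'k::field) \<Rightarrow> ('a \<Rightarrow>\<^sub>0 'k) \<Rightarrow> 'k" where
  "linK f x = (\<Sum>a\<in>Poly_Mapping.keys x. Poly_Mapping.lookup x a * f a)"

definition tens :: "('a \<Rightarrow>\<^sub>0 'k::field) \<Rightarrow> ('c \<Rightarrow>\<^sub>0 'k) \<Rightarrow> ('a \<times> 'c \<Rightarrow>\<^sub>0 'k)" where
  "tens x y = lin (\<lambda>a. lin (\<lambda>c. vec (a, c)) y) x"

definition tensmap :: "('a \<Rightarrow> ('c \<Rightarrow>\<^sub>0 'k::field)) \<Rightarrow> ('b \<Rightarrow> ('d \<Rightarrow>\<^sub>0 'k))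
    \<Rightarrow> 'a \<times> 'b \<Rightarrow> ('c \<times> 'd \<Rightarrow>\<^sub>0 'k)" where
  "tensmap f g = (\<lambda>(a, b). tens (f a) (g b))"

definition mulv :: "('a \<Rightarrow> 'a \<Rightarrow> ('a \<Rightarrow>\<^sub>0 'k::field)) \<Rightarrow> ('a \<Rightarrow>\<^sub>0 'k) \<Rightarrow> ('a \<Rightarrow>\<^sub>0 'k) \<Rightarrow> ('a \<Rightarrow>\<^sub>0 'k)" where
  "mulv m x y = lin (\<lambda>a. lin (\<lambda>b. m a b) y) x"

definition tensmul :: "('a \<Rightarrow> 'a \<Rightarrow> ('a \<Rightarrow>\<^sub>0 'k::field)) \<Rightarrow> 'a \<times> 'a \<Rightarrow> 'a \<times> 'a \<Rightarrow> ('a \<times> 'a \<Rightarrow>\<^sub>0 'k)" where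
  "tensmul m = (\<lambda>(a1, a2) (b1, b2). tens (m a1 b1) (m a2 b2))"

definition tensop :: "('a \<Rightarrow> ('a \<Rightarrow>\<^sub>0 'k::field)) \<Rightarrow> 'a \<times> 'a \<Rightarrow> ('a \<times> 'a \<Rightarrow>\<^sub>0 'k)" where
  "tensop P = (\<lambda>(a, b). tens (P a) (vec b))"

(* The three cases q = theta (Rota--Baxter of weight theta), q = r (Nijenhuis), q = l (TD). *)
datatype 'k rbq = RB 'k | Nij | TD

definition rq_identity :: "'k::field rbq \<Rightarrow> ('a \<Rightarrow> 'a \<Rightarrow> ('a \<Rightarrow>\<^sub>0 'k)) \<Rightarrow> ('a \<Rightarrow>\<^sub>0 'k)
    \<Rightarrow> ('a \<Rightarrow> ('a \<Rightarrow>\<^sub>0 'k)) \<Rightarrow> bool" where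
  "rq_identity q m u P \<longleftrightarrow> (\<forall>x y.
     mulv m (lin P x) (lin P y) =
       lin P (mulv m (lin P x) y + mulv m x (lin P y)) +
       (case q of
          RB \<theta> \<Rightarrow> smul \<theta> (lin P (mulv m x y))
        | Nij \<Rightarrow> - lin P (lin P (mulv m x y))
        | TD \<Rightarrow> - lin P (mulv m (mulv m x (lin P u)) y)))"

definition is_Rq_algebra :: "'k::field rbq \<Rightarrow> ('a \<Rightarrow> 'a \<Rightarrow> ('a \<Rightarrow>\<^sub>0 'k)) \<Rightarrow> ('a \<Rightarrow>\<^sub>0 'k)
    \<Rightarrow> ('a \<Rightarrow> ('a \<Rightarrow>\<^sub>0 'k)) \<Rightarrow> bool" where
  "is_Rq_algebra q m u P \<longleftrightarrow>
     (\<forall>x y z. mulv m (mulv m x y) z = mulv m x (mulv m y z)) \<and>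
     (\<forall>x. mulv m u x = x \<and> mulv m x u = x) \<and>
     rq_identity q m u P"

definition Rq_morphism :: "('a \<Rightarrow> 'a \<Rightarrow> ('a \<Rightarrow>\<^sub>0 'k::field)) \<Rightarrow> ('a \<Rightarrow>\<^sub>0 'k) \<Rightarrow> ('a \<Rightarrow> ('a \<Rightarrow>\<^sub>0 'k))
    \<Rightarrow> ('c \<Rightarrow> 'c \<Rightarrow> ('c \<Rightarrow>\<^sub>0 'k)) \<Rightarrow> ('c \<Rightarrow>\<^sub>0 'k) \<Rightarrow> ('c \<Rightarrow> ('c \<Rightarrow>\<^sub>0 'k))
    \<Rightarrow> ('a \<Rightarrow> ('c \<Rightarrow>\<^sub>0 'k)) \<Rightarrow> bool" where
  "Rq_morphism m u P m' u' P' f \<longleftrightarrow>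
     lin f u = u' \<and>
     (\<forall>x y. lin f (mulv m x y) = mulv m' (lin f x) (lin f y)) \<and>
     (\<forall>x. lin f (lin P x) = lin P' (lin f x))"

definition scalar_op :: "'k::field rbq \<Rightarrow> 'k" where
  "scalar_op q = (case q of RB \<theta> \<Rightarrow> - \<theta> | Nij \<Rightarrow> 1 | TD \<Rightarrow> 1)"

definition Rq_morphism_K :: "'k::field rbq \<Rightarrow> ('a \<Rightarrow> 'a \<Rightarrow> ('a \<Rightarrow>\<^sub>0 'k)) \<Rightarrow> ('a \<Rightarrow>\<^sub>0 'k)
    \<Rightarrow> ('a \<Rightarrow> ('a \<Rightarrow>\<^sub>0 'k)) \<Rightarrow> ('a \<Rightarrow> 'k) \<Rightarrow> bool" where
  "Rq_morphism_K q m u P e \<longleftrightarrow>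
     linK e u = 1 \<and>
     (\<forall>x y. linK e (mulv m x y) = linK e x * linK e y) \<and>
     (\<forall>x. linK e (lin P x) = scalar_op q * linK e x)"

(* Coassociativity (\<Delta> \<otimes> id)\<Delta> = (id \<otimes> \<Delta>)\<Delta>, with (B\<otimes>B)\<otimes>B and B\<otimes>(B\<otimes>B) identified. *)
definition coassoc :: "('a \<Rightarrow> ('a \<times> 'a \<Rightarrow>\<^sub>0 'k::field)) \<Rightarrow> bool" where
  "coassoc D \<longleftrightarrow> (\<forall>w.
     lin (\<lambda>(x, y). tens (D x) (vec y)) (D w) =
     lin (\<lambda>(x, y). lin (\<lambda>(y1, y2). vec ((x, y1), y2)) (D y)) (D w))"

definition right_counit :: "('a \<Rightarrow> ('a \<times> 'a \<Rightarrow>\<^sub>0 'k::field)) \<Rightarrow> ('a \<Rightarrow> 'k) \<Rightarrow> bool" where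
  "right_counit D e \<longleftrightarrow> (\<forall>w. lin (\<lambda>(x, y). smul (e y) (vec x)) (D w) = vec w)"

definition left_counit :: "('a \<Rightarrow> ('a \<times> 'a \<Rightarrow>\<^sub>0 'k::field)) \<Rightarrow> ('a \<Rightarrow> 'k) \<Rightarrow> bool" where
  "left_counit D e \<longleftrightarrow> (\<forall>w. lin (\<lambda>(x, y). smul (e x) (vec y)) (D w) = vec w)"

definition comm_bialgebra :: "('b \<Rightarrow> 'b \<Rightarrow> ('b \<Rightarrow>\<^sub>0 'k::field)) \<Rightarrow> ('b \<Rightarrow>\<^sub>0 'k)
    \<Rightarrow> ('b \<Rightarrow> ('b \<times> 'b \<Rightarrow>\<^sub>0 'k)) \<Rightarrow> ('b \<Rightarrow> 'k) \<Rightarrow> bool" where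
  "comm_bialgebra m u cop cou \<longleftrightarrow>
     (\<forall>x y z. mulv m (mulv m x y) z = mulv m x (mulv m y z)) \<and>
     (\<forall>x y. mulv m x y = mulv m y x) \<and>
     (\<forall>x. mulv m u x = x \<and> mulv m x u = x) \<and>
     coassoc cop \<and> right_counit cop cou \<and> left_counit cop cou \<and>
     lin cop u = tens u u \<and>
     (\<forall>x y. lin cop (mulv m x y) = mulv (tensmul m) (lin cop x) (lin cop y)) \<and>
     linK cou u = 1 \<and>
     (\<forall>x y. linK cou (mulv m x y) = linK cou x * linK cou y)"

definition right_Rq_bialgebra :: "'k::field rbq \<Rightarrow> ('a \<Rightarrow> 'a \<Rightarrow> ('a \<Rightarrow>\<^sub>0 'k)) \<Rightarrow> ('a \<Rightarrow>\<^sub>0 'k)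
    \<Rightarrow> ('a \<Rightarrow> ('a \<Rightarrow>\<^sub>0 'k)) \<Rightarrow> ('a \<Rightarrow> ('a \<times> 'a \<Rightarrow>\<^sub>0 'k)) \<Rightarrow> ('a \<Rightarrow> 'k) \<Rightarrow> bool" where
  "right_Rq_bialgebra q m u P D e \<longleftrightarrow>
     is_Rq_algebra q m u P \<and> coassoc D \<and> right_counit D e \<and>
     Rq_morphism m u P (tensmul m) (tens u u) (tensop P) D \<and>
     Rq_morphism_K q m u P e"

(* T(H): basis = lists of basis elements of H ([] is 1_K, a # U is a \<otimes> U).
  lcons x X = x \<otimes> X for x in H, X in T(H). *)
definition lcons :: "('b \<Rightarrow>\<^sub>0 'k::field) \<Rightarrow> ('b list \<Rightarrow>\<^sub>0 'k) \<Rightarrow> ('b list \<Rightarrow>\<^sub>0 'k)" where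
  "lcons x X = lin (\<lambda>a. lin (\<lambda>W. vec (a # W)) X) x"

fun tprod :: "'k::field rbq \<Rightarrow> ('b \<Rightarrow> 'b \<Rightarrow> ('b \<Rightarrow>\<^sub>0 'k)) \<Rightarrow> ('b \<Rightarrow>\<^sub>0 'k)
    \<Rightarrow> 'b list \<Rightarrow> 'b list \<Rightarrow> ('b list \<Rightarrow>\<^sub>0 'k)" where
  "tprod q m u [] V = vec V"
| "tprod q m u (a # U) [] = vec (a # U)"
| "tprod q m u (a # U) (b # V) =
     lcons (vec a) (tprod q m u U (b # V)) + lcons (vec b) (tprod q m u (a # U) V) +
     (case q of
        RB \<theta> \<Rightarrow> smul \<theta> (lcons (m a b) (tprod q m u U V))
      | Nij \<Rightarrow> - lcons u (lcons (m a b) (tprod q m u U V))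
      | TD \<Rightarrow> - lcons (m a b) (lcons u (tprod q m u U V)))"

(* T^+(H) = H \<otimes> T(H): basis 'b \<times> 'b list. Product \<bar>\<bullet>^q, unit, operator P_H, and i_H. *)
definition tpmul :: "'k::field rbq \<Rightarrow> ('b \<Rightarrow> 'b \<Rightarrow> ('b \<Rightarrow>\<^sub>0 'k)) \<Rightarrow> ('b \<Rightarrow>\<^sub>0 'k)
    \<Rightarrow> 'b \<times> 'b list \<Rightarrow> 'b \<times> 'b list \<Rightarrow> ('b \<times> 'b list \<Rightarrow>\<^sub>0 'k)" where
  "tpmul q m u = (\<lambda>(a, U) (b, V). tens (m a b) (tprod q m u U V))"

definition tpunit :: "('b \<Rightarrow>\<^sub>0 'k::field) \<Rightarrow> ('b \<times> 'b list \<Rightarrow>\<^sub>0 'k)" where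
  "tpunit u = tens u (vec [])"

definition tpP :: "('b \<Rightarrow>\<^sub>0 'k::field) \<Rightarrow> 'b \<times> 'b list \<Rightarrow> ('b \<times> 'b list \<Rightarrow>\<^sub>0 'k)" where
  "tpP u = (\<lambda>(a, U). tens u (vec (a # U)))"

definition iH :: "'b \<Rightarrow> ('b \<times> 'b list \<Rightarrow>\<^sub>0 'k::field)" where
  "iH h = vec (h, [])"

end

theory Submission
  imports Defs
begin

(* T^+(H) is an R_q-algebra: the product of T(H) is associative by induction on the total length
  of three words, since expanding both bracketings of a triple product by the recursive definition
  gives the same seven terms, the correction terms M_q combining symmetrically. As
  h \<otimes> b \<otimes> W = i_H(h) P_H(b \<otimes> W), T^+(H) is generated by i_H(H) under the product and P_H, so
  two R_q-algebra morphisms out of T^+(H) that agree on i_H(H) coincide. Both (\<Delta> \<otimes> id)\<Delta> and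
  (id \<otimes> \<Delta>)\<Delta> are such morphisms into T^+(H)^{\<otimes>3}, and they agree on i_H(H) by coassociativity
  of \<delta>; likewise (id \<otimes> e)\<Delta> and id agree on i_H(H) because \<epsilon> is a right counit of \<delta>. *)

section \<open>Linear and bilinear extension\<close>

lemma lookup_smul [simp]: "Poly_Mapping.lookup (smul c p) k = c * Poly_Mapping.lookup p k"
  by (simp add: smul_def Poly_Mapping.map.rep_eq when_def)

lemma keys_smul: "Poly_Mapping.keys (smul c p) \<subseteq> Poly_Mapping.keys p"
  by (auto simp: in_keys_iff)

lemma smul_add_right [simp]: "smul c (x + y) = smul c x + smul c y"
  by (rule poly_mapping_eqI) (simp add: lookup_add algebra_simps)

lemma smul_add_left: "smul (c + d) x = smul c x + smul d x"
  by (rule poly_mapping_eqI) (simp add: lookup_add algebra_simps)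

lemma smul_smul [simp]: "smul c (smul d x) = smul (c * d) x"
  by (rule poly_mapping_eqI) simp

lemma smul_zero_right [simp]: "smul c 0 = 0"
  by (rule poly_mapping_eqI) simp

lemma smul_zero_left [simp]: "smul 0 x = 0"
  by (rule poly_mapping_eqI) simp

lemma smul_one [simp]: "smul 1 x = x"
  by (rule poly_mapping_eqI) simp

lemma smul_neg_right [simp]: "smul c (- x) = - smul c x"
  by (rule poly_mapping_eqI) simp

lemma smul_diff_right [simp]: "smul c (x - y) = smul c x - smul c y"
  by (rule poly_mapping_eqI) (simp add: lookup_minus algebra_simps)

lemma smul_sum: "smul c (sum f S) = (\<Sum>a\<in>S. smul c (f a))"
  by (rule poly_mapping_eqI) (simp add: lookup_sum sum_distrib_left)

lemma lookup_vec: "Poly_Mapping.lookup (vec a) b = (if a = b then 1 else 0)"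
  by (simp add: vec_def lookup_single)

lemma keys_vec [simp]: "Poly_Mapping.keys (vec a :: _ \<Rightarrow>\<^sub>0 'k::field) = {a}"
  by (simp add: vec_def)

lemma lin_eq_sum_superset:
  assumes "finite S" "Poly_Mapping.keys x \<subseteq> S"
  shows "lin f x = (\<Sum>a\<in>S. smul (Poly_Mapping.lookup x a) (f a))"
  unfolding lin_def
  by (rule sum.mono_neutral_left) (use assms in \<open>auto simp: in_keys_iff\<close>)

lemma lookup_lin:
  "Poly_Mapping.lookup (lin f x) b =
     (\<Sum>a\<in>Poly_Mapping.keys x. Poly_Mapping.lookup x a * Poly_Mapping.lookup (f a) b)"
  by (simp add: lin_def lookup_sum)

lemma lin_add [simp]: "lin f (x + y) = lin f x + lin f y"
proof -
  let ?S = "Poly_Mapping.keys x \<union> Poly_Mapping.keys y"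
  have "lin f (x + y) = (\<Sum>a\<in>?S. smul (Poly_Mapping.lookup (x + y) a) (f a))"
    using keys_add[of x y] by (intro lin_eq_sum_superset) auto
  also have "\<dots> = (\<Sum>a\<in>?S. smul (Poly_Mapping.lookup x a) (f a)) +
                  (\<Sum>a\<in>?S. smul (Poly_Mapping.lookup y a) (f a))"
    by (simp add: lookup_add smul_add_left sum.distrib)
  also have "\<dots> = lin f x + lin f y"
    by (subst (1 2) lin_eq_sum_superset[of ?S]) auto
  finally show ?thesis .
qed

lemma lin_smul [simp]: "lin f (smul c x) = smul c (lin f x)"
proof -
  have "lin f (smul c x) =
        (\<Sum>a\<in>Poly_Mapping.keys x. smul (Poly_Mapping.lookup (smul c x) a) (f a))"
    by (intro lin_eq_sum_superset keys_smul) auto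
  then show ?thesis
    by (simp add: lin_def smul_sum)
qed

lemma lin_zero [simp]: "lin f 0 = 0"
  by (simp add: lin_def)

lemma lin_neg [simp]: "lin f (- x) = - lin f x"
  using lin_add[of f x "- x"] by (simp add: minus_unique)

lemma lin_diff [simp]: "lin f (x - y) = lin f x - lin f y"
  using lin_add[of f x "- y"] by simp

lemma lin_sum: "lin f (sum g S) = (\<Sum>a\<in>S. lin f (g a))"
  by (induction S rule: infinite_finite_induct) auto

lemma lin_vec [simp]: "lin f (vec a) = f a"
  by (simp add: lin_def vec_def)

lemma lin_vec_self [simp]: "lin vec x = x"
  by (rule poly_mapping_eqI)
    (auto simp: lookup_lin lookup_vec in_keys_iff if_distrib cong: if_cong)

lemma lin_cong: "(\<And>a. a \<in> Poly_Mapping.keys x \<Longrightarrow> f a = g a) \<Longrightarrow> lin f x = lin g x"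
  by (simp add: lin_def)

lemma lin_lin: "lin g (lin f x) = lin (\<lambda>a. lin g (f a)) x"
proof -
  have "lin g (lin f x) = (\<Sum>a\<in>Poly_Mapping.keys x. lin g (smul (Poly_Mapping.lookup x a) (f a)))"
    by (simp only: lin_def[of f x] lin_sum)
  then show ?thesis
    by (simp add: lin_def[of "\<lambda>a. lin g (f a)"])
qed

lemma lin_fun_add: "lin (\<lambda>a. f a + g a) x = lin f x + lin g x"
  by (simp add: lin_def sum.distrib)

lemma lin_fun_smul: "lin (\<lambda>a. smul c (f a)) x = smul c (lin f x)"
  by (rule poly_mapping_eqI) (simp add: lookup_lin sum_distrib_left algebra_simps)

lemma lin_fun_neg: "lin (\<lambda>a. - f a) x = - lin f x"
  by (rule poly_mapping_eqI) (simp add: lookup_lin sum_negf)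

lemma lin_fun_zero [simp]: "lin (\<lambda>a. 0) x = 0"
  by (simp add: lin_def)

lemma lin_swap: "lin (\<lambda>a. lin (\<lambda>b. B a b) y) x = lin (\<lambda>b. lin (\<lambda>a. B a b) x) y"
  by (rule poly_mapping_eqI)
    (simp add: lookup_lin sum_distrib_left sum_distrib_right algebra_simps
      sum.swap[of _ "Poly_Mapping.keys x"])

lemma linK_eq_sum_superset:
  assumes "finite S" "Poly_Mapping.keys x \<subseteq> S"
  shows "linK f x = (\<Sum>a\<in>S. Poly_Mapping.lookup x a * f a)"
  unfolding linK_def
  by (rule sum.mono_neutral_left) (use assms in \<open>auto simp: in_keys_iff\<close>)

lemma linK_add [simp]: "linK f (x + y) = linK f x + linK f y"
proof -
  let ?S = "Poly_Mapping.keys x \<union> Poly_Mapping.keys y"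
  have "linK f (x + y) = (\<Sum>a\<in>?S. Poly_Mapping.lookup (x + y) a * f a)"
    using keys_add[of x y] by (intro linK_eq_sum_superset) auto
  also have "\<dots> = linK f x + linK f y"
    by (subst (1 2) linK_eq_sum_superset[of ?S])
      (auto simp: lookup_add sum.distrib algebra_simps)
  finally show ?thesis .
qed

lemma linK_smul [simp]: "linK f (smul c x) = c * linK f x"
proof -
  have "linK f (smul c x) = (\<Sum>a\<in>Poly_Mapping.keys x. Poly_Mapping.lookup (smul c x) a * f a)"
    by (intro linK_eq_sum_superset keys_smul) auto
  then show ?thesis
    by (simp add: linK_def sum_distrib_left algebra_simps)
qed

lemma linK_vec [simp]: "linK f (vec a) = f a"
  by (simp add: linK_def vec_def)

definition pm_linear :: "(('a \<Rightarrow>\<^sub>0 'k::field) \<Rightarrow> ('c \<Rightarrow>\<^sub>0 'k)) \<Rightarrow> bool" where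
  "pm_linear F \<longleftrightarrow> (\<forall>x y. F (x + y) = F x + F y) \<and> (\<forall>c x. F (smul c x) = smul c (F x))"

lemma pm_linear_zero:
  assumes "pm_linear F"
  shows "F 0 = 0"
  using assms smul_zero_left[of 0] smul_zero_left[of "F 0"] unfolding pm_linear_def by metis

lemma pm_linear_sum:
  assumes "pm_linear F"
  shows "F (sum g S) = (\<Sum>a\<in>S. F (g a))"
  using assms by (induction S rule: infinite_finite_induct) (auto simp: pm_linear_zero pm_linear_def)

lemma pm_linear_eq_lin:
  assumes "pm_linear F"
  shows "F x = lin (\<lambda>a. F (vec a)) x"
proof -
  have "F x = F (\<Sum>a\<in>Poly_Mapping.keys x. smul (Poly_Mapping.lookup x a) (vec a))"
    using lin_vec_self[of x] by (simp only: lin_def)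
  also have "\<dots> = lin (\<lambda>a. F (vec a)) x"
    using assms by (simp add: pm_linear_sum pm_linear_def lin_def)
  finally show ?thesis .
qed

lemma pm_linear_eq_vec:
  assumes "pm_linear F" "pm_linear G" "\<And>a. F (vec a) = G (vec a)"
  shows "F x = G x"
  using pm_linear_eq_lin[OF assms(1), of x] pm_linear_eq_lin[OF assms(2), of x] assms(3) by simp

lemma pm_linear_lin [simp]: "pm_linear (lin f)"
  by (simp add: pm_linear_def)

definition bilin :: "('a \<Rightarrow> 'b \<Rightarrow> ('c \<Rightarrow>\<^sub>0 'k::field)) \<Rightarrow> ('a \<Rightarrow>\<^sub>0 'k) \<Rightarrow> ('b \<Rightarrow>\<^sub>0 'k) \<Rightarrow> ('c \<Rightarrow>\<^sub>0 'k)"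
  where "bilin B x y = lin (\<lambda>a. lin (\<lambda>b. B a b) y) x"

lemma mulv_eq_bilin: "mulv m = bilin m"
  by (simp add: fun_eq_iff mulv_def bilin_def)

lemma tens_eq_bilin: "tens = bilin (\<lambda>a c. vec (a, c))"
  by (simp add: fun_eq_iff tens_def bilin_def)

lemma lcons_eq_bilin: "lcons = bilin (\<lambda>a W. vec (a # W))"
  by (simp add: fun_eq_iff lcons_def bilin_def)

lemma bilin_add_left [simp]: "bilin B (x + x') y = bilin B x y + bilin B x' y"
  and bilin_add_right [simp]: "bilin B x (y + y') = bilin B x y + bilin B x y'"
  and bilin_smul_left [simp]: "bilin B (smul c x) y = smul c (bilin B x y)"
  and bilin_smul_right [simp]: "bilin B x (smul c y) = smul c (bilin B x y)"
  and bilin_neg_left [simp]: "bilin B (- x) y = - bilin B x y"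
  and bilin_neg_right [simp]: "bilin B x (- y) = - bilin B x y"
  and bilin_diff_left [simp]: "bilin B (x - x') y = bilin B x y - bilin B x' y"
  and bilin_zero_left [simp]: "bilin B 0 y = 0"
  and bilin_zero_right [simp]: "bilin B x 0 = 0"
  and bilin_vec_vec [simp]: "bilin B (vec a) (vec b) = B a b"
  by (simp_all add: bilin_def lin_fun_add lin_fun_smul lin_fun_neg)

lemma bilin_diff_right [simp]: "bilin B x (y - y') = bilin B x y - bilin B x y'"
  using bilin_add_right[of B x y "- y'"] by simp

lemma bilin_vec_left: "bilin B x y = lin (\<lambda>a. bilin B (vec a) y) x"
  by (simp add: bilin_def)

lemma bilin_vec_right: "bilin B x y = lin (\<lambda>b. bilin B x (vec b)) y"
  by (simp add: bilin_def lin_swap[of _ y])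

lemma lcons_add_left [simp]: "lcons (x + x') y = lcons x y + lcons x' y"
  and lcons_add_right [simp]: "lcons x (y + y') = lcons x y + lcons x y'"
  and lcons_smul_left [simp]: "lcons (smul c x) y = smul c (lcons x y)"
  and lcons_smul_right [simp]: "lcons x (smul c y) = smul c (lcons x y)"
  and lcons_neg_left [simp]: "lcons (- x) y = - lcons x y"
  and lcons_neg_right [simp]: "lcons x (- y) = - lcons x y"
  and lcons_diff_left [simp]: "lcons (x - x') y = lcons x y - lcons x' y"
  and lcons_diff_right [simp]: "lcons x (y - y') = lcons x y - lcons x y'"
  and lcons_zero_left [simp]: "lcons 0 y = 0"
  and lcons_zero_right [simp]: "lcons x 0 = 0"
  and lcons_vec_vec [simp]: "lcons (vec a) (vec U) = vec (a # U)"
  by (simp_all add: lcons_eq_bilin)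

lemma tens_add_left [simp]: "tens (x + x') y = tens x y + tens x' y"
  and tens_add_right [simp]: "tens x (y + y') = tens x y + tens x y'"
  and tens_smul_left [simp]: "tens (smul c x) y = smul c (tens x y)"
  and tens_smul_right [simp]: "tens x (smul c y) = smul c (tens x y)"
  and tens_neg_left [simp]: "tens (- x) y = - tens x y"
  and tens_neg_right [simp]: "tens x (- y) = - tens x y"
  and tens_diff_left [simp]: "tens (x - x') y = tens x y - tens x' y"
  and tens_diff_right [simp]: "tens x (y - y') = tens x y - tens x y'"
  and tens_zero_left [simp]: "tens 0 y = 0"
  and tens_zero_right [simp]: "tens x 0 = 0"
  and tens_vec_vec [simp]: "tens (vec a) (vec b) = vec (a, b)"
  by (simp_all add: tens_eq_bilin)

lemma pm_linear_eq_tens: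
  assumes "pm_linear F" "pm_linear G" "\<And>x y. F (tens x y) = G (tens x y)"
  shows "F p = G p"
proof (rule pm_linear_eq_vec[OF assms(1,2)])
  fix a :: "'a \<times> 'b"
  show "F (vec a) = G (vec a)"
    using assms(3)[of "vec (fst a)" "vec (snd a)"] by simp
qed

lemma pm_bilinear_eq_vecI:
  assumes "\<And>y. pm_linear (\<lambda>x. F x y)" "\<And>y. pm_linear (\<lambda>x. G x y)"
    and "\<And>x. pm_linear (F x)" "\<And>x. pm_linear (G x)"
    and "\<And>a b. F (vec a) (vec b) = G (vec a) (vec b)"
  shows "F = G"
proof (intro ext)
  fix x y
  have "F (vec a) y = G (vec a) y" for a
    using assms(3-5) by (rule pm_linear_eq_vec)
  then show "F x y = G x y"
    by (rule pm_linear_eq_vec[where F = "\<lambda>x. F x y", OF assms(1,2)])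
qed

lemma pm_bilinear_eq_tensI:
  assumes "\<And>y. pm_linear (\<lambda>x. F x y)" "\<And>y. pm_linear (\<lambda>x. G x y)"
    and "\<And>x. pm_linear (F x)" "\<And>x. pm_linear (G x)"
    and "\<And>a A b B. F (tens a A) (tens b B) = G (tens a A) (tens b B)"
  shows "F = G"
  using assms(1-4)
proof (rule pm_bilinear_eq_vecI)
  fix p p'
  show "F (vec p) (vec p') = G (vec p) (vec p')"
    using assms(5)[of "vec (fst p)" "vec (snd p)" "vec (fst p')" "vec (snd p')"] by simp
qed

lemma pm_linear_comp: "pm_linear F \<Longrightarrow> pm_linear G \<Longrightarrow> pm_linear (\<lambda>x. F (G x))"
  and pm_linear_id: "pm_linear (\<lambda>x. x)"
  and pm_linear_bilin_right: "pm_linear (\<lambda>y. bilin B x y)"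
  and pm_linear_bilin_left: "pm_linear (\<lambda>x. bilin B x y)"
  and pm_linear_add: "pm_linear F \<Longrightarrow> pm_linear G \<Longrightarrow> pm_linear (\<lambda>x. F x + G x)"
  and pm_linear_diff: "pm_linear F \<Longrightarrow> pm_linear G \<Longrightarrow> pm_linear (\<lambda>x. F x - G x)"
  and pm_linear_smul: "pm_linear F \<Longrightarrow> pm_linear (\<lambda>x. smul c (F x))"
  and pm_linear_neg: "pm_linear F \<Longrightarrow> pm_linear (\<lambda>x. - F x)"
  by (simp_all add: pm_linear_def mult.commute)

lemmas pm_linear_intros =
  pm_linear_comp[OF pm_linear_bilin_right] pm_linear_comp[OF pm_linear_bilin_left]
  pm_linear_comp[OF pm_linear_lin] pm_linear_add pm_linear_diff pm_linear_smul pm_linear_neg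
  pm_linear_id

section \<open>Tensor products of maps\<close>

definition tensmul_pair :: "('a \<Rightarrow> 'a \<Rightarrow> ('c \<Rightarrow>\<^sub>0 'k::field)) \<Rightarrow> ('b \<Rightarrow> 'b \<Rightarrow> ('d \<Rightarrow>\<^sub>0 'k))
    \<Rightarrow> 'a \<times> 'b \<Rightarrow> 'a \<times> 'b \<Rightarrow> ('c \<times> 'd \<Rightarrow>\<^sub>0 'k)" where
  "tensmul_pair M1 M2 = (\<lambda>(a1, a2) (b1, b2). tens (M1 a1 b1) (M2 a2 b2))"

definition tens_reassoc :: "'a \<times> ('b \<times> 'c) \<Rightarrow> (('a \<times> 'b) \<times> 'c \<Rightarrow>\<^sub>0 'k::field)" where
  "tens_reassoc = (\<lambda>(x, (y1, y2)). vec ((x, y1), y2))"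

lemma tensmul_eq_tensmul_pair: "tensmul M = tensmul_pair M M"
  by (simp add: tensmul_def tensmul_pair_def)

lemma tensop_eq_tensmap: "tensop P = tensmap P vec"
  by (simp add: tensop_def tensmap_def)

lemma tensmap_apply [simp]: "tensmap f g (a, b) = tens (f a) (g b)"
  by (simp add: tensmap_def)

lemma tens_reassoc_apply [simp]: "tens_reassoc (a, (b, c)) = vec ((a, b), c)"
  by (simp add: tens_reassoc_def)

lemma bilin_tensmul_pair_tens:
  "bilin (tensmul_pair M1 M2) (tens x1 x2) (tens y1 y2) = tens (bilin M1 x1 y1) (bilin M2 x2 y2)"
proof -
  have "(\<lambda>x2 y2. bilin (tensmul_pair M1 M2) (tens (vec a) x2) (tens (vec b) y2)) =
        (\<lambda>x2 y2. tens (M1 a b) (bilin M2 x2 y2))" for a b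
    by (rule pm_bilinear_eq_vecI) (auto simp: pm_linear_def tensmul_pair_def)
  then have "(\<lambda>x1 y1. bilin (tensmul_pair M1 M2) (tens x1 x2) (tens y1 y2)) =
             (\<lambda>x1 y1. tens (bilin M1 x1 y1) (bilin M2 x2 y2))"
    by (intro pm_bilinear_eq_vecI) (auto simp: pm_linear_def fun_eq_iff)
  then show ?thesis
    by (simp add: fun_eq_iff)
qed

lemma lin_tensmap_tens: "lin (tensmap f g) (tens x y) = tens (lin f x) (lin g y)"
proof -
  have "(\<lambda>x y. lin (tensmap f g) (tens x y)) = (\<lambda>x y. tens (lin f x) (lin g y))"
    by (rule pm_bilinear_eq_vecI) (auto simp: pm_linear_def)
  then show ?thesis
    by (simp add: fun_eq_iff)
qed

lemma lin_tensmap_vec_vec [simp]: "lin (tensmap vec vec) x = x"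
  using lin_cong[of x "tensmap vec vec" vec] by auto

lemma lin_tensmap_lin_tensmap:
  "lin (tensmap f g) (lin (tensmap f' g') x) = lin (tensmap (\<lambda>a. lin f (f' a)) (\<lambda>b. lin g (g' b))) x"
  by (simp add: lin_lin) (rule lin_cong, auto simp: lin_tensmap_tens)

lemma lin_tensmap_bilin_tensmul_pair:
  assumes "\<And>x y. lin f (bilin M1 x y) = bilin N1 (lin f x) (lin f y)"
    and "\<And>x y. lin g (bilin M2 x y) = bilin N2 (lin g x) (lin g y)"
  shows "lin (tensmap f g) (bilin (tensmul_pair M1 M2) x y) =
         bilin (tensmul_pair N1 N2) (lin (tensmap f g) x) (lin (tensmap f g) y)"
proof -
  have "(\<lambda>x y. lin (tensmap f g) (bilin (tensmul_pair M1 M2) x y)) =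
        (\<lambda>x y. bilin (tensmul_pair N1 N2) (lin (tensmap f g) x) (lin (tensmap f g) y))"
    by (rule pm_bilinear_eq_tensI)
      (auto simp: pm_linear_def bilin_tensmul_pair_tens lin_tensmap_tens assms)
  then show ?thesis
    by (simp add: fun_eq_iff)
qed

lemma lin_tens_reassoc_tens: "lin tens_reassoc (tens x (tens y z)) = tens (tens x y) z"
proof -
  have "(\<lambda>y z. lin tens_reassoc (tens (vec a) (tens y z))) = (\<lambda>y z. tens (tens (vec a) y) z)" for a
    by (rule pm_bilinear_eq_vecI) (auto simp: pm_linear_def)
  then have "lin tens_reassoc (tens (vec a) (tens y z)) = tens (tens (vec a) y) z" for a
    by metis
  then show ?thesis
    by (rule pm_linear_eq_vec[where x = x, rotated 2])
      (auto simp: pm_linear_def simp del: tens_vec_vec)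
qed

lemma lin_tens_reassoc_tensmap:
  "lin tens_reassoc (lin (tensmap f (tensmap g h)) x) = lin (tensmap (tensmap f g) h) (lin tens_reassoc x)"
  by (simp add: lin_lin) (rule lin_cong, auto simp: lin_tens_reassoc_tens)

lemma lin_tens_reassoc_bilin:
  "lin tens_reassoc (bilin (tensmul_pair M1 (tensmul_pair M2 M3)) x y) =
   bilin (tensmul_pair (tensmul_pair M1 M2) M3) (lin tens_reassoc x) (lin tens_reassoc y)"
proof -
  have "(\<lambda>x' y'. lin tens_reassoc (bilin (tensmul_pair M1 (tensmul_pair M2 M3)) (tens a x') (tens b y'))) =
        (\<lambda>x' y'. bilin (tensmul_pair (tensmul_pair M1 M2) M3)
            (lin tens_reassoc (tens a x')) (lin tens_reassoc (tens b y')))" for a b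
    by (rule pm_bilinear_eq_tensI)
      (auto simp: pm_linear_def bilin_tensmul_pair_tens lin_tens_reassoc_tens simp del: tens_vec_vec)
  then have "(\<lambda>x y. lin tens_reassoc (bilin (tensmul_pair M1 (tensmul_pair M2 M3)) x y)) =
             (\<lambda>x y. bilin (tensmul_pair (tensmul_pair M1 M2) M3) (lin tens_reassoc x) (lin tens_reassoc y))"
    by (intro pm_bilinear_eq_tensI) (auto simp: pm_linear_def fun_eq_iff simp del: tens_vec_vec)
  then show ?thesis
    by (simp add: fun_eq_iff)
qed

lemma coassoc_iff_tensmap:
  "coassoc D \<longleftrightarrow> (\<forall>w. lin (tensmap D vec) (D w) = lin tens_reassoc (lin (tensmap vec D) (D w)))"
proof -
  have right: "lin (\<lambda>(x, y). lin (\<lambda>(y1, y2). vec ((x, y1), y2)) (D y)) z =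
               lin tens_reassoc (lin (tensmap vec D) z)" for z
    by (simp add: lin_lin)
      (rule lin_cong, auto simp: tens_def lin_lin tens_reassoc_def intro!: lin_cong split: prod.split)
  have left: "(\<lambda>(x, y). tens (D x) (vec y)) = tensmap D vec"
    by (simp add: tensmap_def)
  show ?thesis
    unfolding coassoc_def left right ..
qed

section \<open>The algebra T(H)\<close>

text \<open>Mq q u w Z is the correction term M_q of the product on T(H), with w in place of the
  product [a;b] in H and Z in place of the product of the tails U and V. Multiplying such a term
  by a further word produces the second-order correction Mq2.\<close>

definition Mq :: "'k::field rbq \<Rightarrow> ('b \<Rightarrow>\<^sub>0 'k) \<Rightarrow> ('b \<Rightarrow>\<^sub>0 'k) \<Rightarrow> ('b list \<Rightarrow>\<^sub>0 'k)
    \<Rightarrow> ('b list \<Rightarrow>\<^sub>0 'k)" where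
  "Mq q u w Z = (case q of
      RB \<theta> \<Rightarrow> smul \<theta> (lcons w Z)
    | Nij \<Rightarrow> - lcons u (lcons w Z)
    | TD \<Rightarrow> - lcons w (lcons u Z))"

definition Mq2 :: "'k::field rbq \<Rightarrow> ('b \<Rightarrow>\<^sub>0 'k) \<Rightarrow> ('b \<Rightarrow>\<^sub>0 'k) \<Rightarrow> ('b list \<Rightarrow>\<^sub>0 'k)
    \<Rightarrow> ('b list \<Rightarrow>\<^sub>0 'k)" where
  "Mq2 q u w Z = (case q of
      RB \<theta> \<Rightarrow> smul (\<theta> * \<theta>) (lcons w Z)
    | Nij \<Rightarrow> lcons u (lcons u (lcons w Z))
    | TD \<Rightarrow> lcons w (lcons u (lcons u Z)))"

lemma Mq_add_left [simp]: "Mq q u (w + w') Z = Mq q u w Z + Mq q u w' Z"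
  and Mq_add_right [simp]: "Mq q u w (Z + Z') = Mq q u w Z + Mq q u w Z'"
  and Mq_smul_left [simp]: "Mq q u (smul c w) Z = smul c (Mq q u w Z)"
  and Mq_smul_right [simp]: "Mq q u w (smul c Z) = smul c (Mq q u w Z)"
  and Mq_neg_left [simp]: "Mq q u (- w) Z = - Mq q u w Z"
  and Mq_neg_right [simp]: "Mq q u w (- Z) = - Mq q u w Z"
  and Mq_zero_left [simp]: "Mq q u 0 Z = 0"
  and Mq_zero_right [simp]: "Mq q u w 0 = 0"
  by (cases q; simp add: Mq_def ac_simps)+

lemma Mq_diff_left [simp]: "Mq q u (w - w') Z = Mq q u w Z - Mq q u w' Z"
  and Mq_diff_right [simp]: "Mq q u w (Z - Z') = Mq q u w Z - Mq q u w Z'"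
  using Mq_add_left[of q u w "- w'" Z] Mq_add_right[of q u w Z "- Z'"] by simp_all

lemma tprod_Cons_Cons [simp]:
  "tprod q m u (a # U) (b # V) =
     lcons (vec a) (tprod q m u U (b # V)) + lcons (vec b) (tprod q m u (a # U) V) +
     Mq q u (m a b) (tprod q m u U V)"
  by (simp add: Mq_def)

declare tprod.simps(3) [simp del]

lemma tprod_Nil_right [simp]: "tprod q m u U [] = vec U"
  by (cases U) auto

locale mult_with_unit =
  fixes m :: "'b \<Rightarrow> 'b \<Rightarrow> ('b \<Rightarrow>\<^sub>0 'k::field)" and u :: "'b \<Rightarrow>\<^sub>0 'k"
begin

abbreviation tmul :: "'k rbq \<Rightarrow> ('b list \<Rightarrow>\<^sub>0 'k) \<Rightarrow> ('b list \<Rightarrow>\<^sub>0 'k) \<Rightarrow> ('b list \<Rightarrow>\<^sub>0 'k)"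
  where "tmul q \<equiv> bilin (tprod q m u)"

lemma tmul_Nil_left [simp]: "tmul q (vec []) X = X"
  by (subst bilin_vec_right) simp

lemma tmul_Nil_right [simp]: "tmul q X (vec []) = X"
  by (subst bilin_vec_left) simp

lemma tmul_lcons_lcons:
  "tmul q (lcons x X) (lcons y Y) =
     lcons x (tmul q X (lcons y Y)) + lcons y (tmul q (lcons x X) Y) +
     Mq q u (bilin m x y) (tmul q X Y)"
proof -
  have "(\<lambda>X Y. tmul q (lcons (vec a) X) (lcons (vec b) Y)) =
        (\<lambda>X Y. lcons (vec a) (tmul q X (lcons (vec b) Y)) +
          lcons (vec b) (tmul q (lcons (vec a) X) Y) + Mq q u (m a b) (tmul q X Y))" for a b
    by (rule pm_bilinear_eq_vecI) (auto simp: pm_linear_def)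
  then have "(\<lambda>x y. tmul q (lcons x X) (lcons y Y)) =
        (\<lambda>x y. lcons x (tmul q X (lcons y Y)) + lcons y (tmul q (lcons x X) Y) +
          Mq q u (bilin m x y) (tmul q X Y))"
    by (intro pm_bilinear_eq_vecI) (auto simp: pm_linear_def fun_eq_iff)
  then show ?thesis
    by (simp add: fun_eq_iff)
qed

end

locale unital_algebra = mult_with_unit +
  assumes mult_assoc: "\<And>x y z. bilin m (bilin m x y) z = bilin m x (bilin m y z)"
    and mult_unit_left [simp]: "\<And>x. bilin m u x = x"
    and mult_unit_right [simp]: "\<And>x. bilin m x u = x"
begin

lemma tmul_TD_lcons_unit_left: "tmul TD (lcons u W) V = lcons u (tmul TD W V)"
proof -
  have "tmul TD (lcons u W) (vec V) = lcons u (tmul TD W (vec V))" for V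
  proof (induction V arbitrary: W)
    case (Cons b V)
    have "tmul TD (lcons u W) (vec (b # V)) = tmul TD (lcons u W) (lcons (vec b) (vec V))"
      by simp
    also have "\<dots> = lcons u (tmul TD W (vec (b # V)))"
      by (subst tmul_lcons_lcons) (simp add: Cons Mq_def)
    finally show ?case .
  qed simp
  then show ?thesis
    by (rule pm_linear_eq_vec[where x = V, rotated 2]) (auto simp: pm_linear_def)
qed

lemma tmul_TD_lcons_unit_right: "tmul TD V (lcons u W) = lcons u (tmul TD V W)"
proof -
  have "tmul TD (vec V) (lcons u W) = lcons u (tmul TD (vec V) W)" for V
  proof (induction V arbitrary: W)
    case (Cons a V)
    have "tmul TD (vec (a # V)) (lcons u W) = tmul TD (lcons (vec a) (vec V)) (lcons u W)"
      by simp
    also have "\<dots> = lcons u (tmul TD (vec (a # V)) W)"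
      by (subst tmul_lcons_lcons) (simp add: Cons Mq_def)
    finally show ?case .
  qed simp
  then show ?thesis
    by (rule pm_linear_eq_vec[where x = V, rotated 2]) (auto simp: pm_linear_def)
qed

lemma tmul_Mq_lcons:
  "tmul q (Mq q u w W) (lcons C Z) =
     lcons C (tmul q (Mq q u w W) Z) + Mq q u w (tmul q W (lcons C Z)) +
     Mq2 q u (bilin m w C) (tmul q W Z)"
  by (cases q) (simp_all add: Mq_def Mq2_def tmul_lcons_lcons
      tmul_TD_lcons_unit_left tmul_TD_lcons_unit_right)

lemma tmul_lcons_Mq:
  "tmul q (lcons A X) (Mq q u w W) =
     lcons A (tmul q X (Mq q u w W)) + Mq q u w (tmul q (lcons A X) W) +
     Mq2 q u (bilin m A w) (tmul q X W)"
  by (cases q) (simp_all add: Mq_def Mq2_def tmul_lcons_lcons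
      tmul_TD_lcons_unit_left tmul_TD_lcons_unit_right)

lemma tmul_tmul_lcons_left:
  "tmul q (tmul q (lcons A X) (lcons B Y)) (lcons C Z) =
     lcons A (tmul q (tmul q X (lcons B Y)) (lcons C Z)) +
     lcons B (tmul q (tmul q (lcons A X) Y) (lcons C Z)) +
     lcons C (tmul q (tmul q (lcons A X) (lcons B Y)) Z) +
     Mq q u (bilin m A C) (tmul q (tmul q X (lcons B Y)) Z) +
     Mq q u (bilin m B C) (tmul q (tmul q (lcons A X) Y) Z) +
     Mq q u (bilin m A B) (tmul q (tmul q X Y) (lcons C Z)) +
     Mq2 q u (bilin m (bilin m A B) C) (tmul q (tmul q X Y) Z)"
  by (simp add: tmul_lcons_lcons tmul_Mq_lcons)

lemma tmul_tmul_lcons_right: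
  "tmul q (lcons A X) (tmul q (lcons B Y) (lcons C Z)) =
     lcons A (tmul q X (tmul q (lcons B Y) (lcons C Z))) +
     lcons B (tmul q (lcons A X) (tmul q Y (lcons C Z))) +
     lcons C (tmul q (lcons A X) (tmul q (lcons B Y) Z)) +
     Mq q u (bilin m A B) (tmul q X (tmul q Y (lcons C Z))) +
     Mq q u (bilin m A C) (tmul q X (tmul q (lcons B Y) Z)) +
     Mq q u (bilin m B C) (tmul q (lcons A X) (tmul q Y Z)) +
     Mq2 q u (bilin m A (bilin m B C)) (tmul q X (tmul q Y Z))"
  by (simp add: tmul_lcons_lcons tmul_lcons_Mq)

text \<open>Induction on the total length: the two expansions agree term by term, by the induction
  hypothesis on shorter words and associativity of m.\<close>

lemma tmul_assoc_vec:
  "tmul q (tmul q (vec U) (vec V)) (vec W) = tmul q (vec U) (tmul q (vec V) (vec W))"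
proof (induction "length U + length V + length W" arbitrary: U V W rule: less_induct)
  case less
  show ?case
  proof (cases "U = [] \<or> V = [] \<or> W = []")
    case True
    then show ?thesis by auto
  next
    case False
    then obtain a U' b V' c W' where U: "U = a # U'" and V: "V = b # V'" and W: "W = c # W'"
      by (meson list.exhaust)
    show ?thesis
      using tmul_tmul_lcons_left[of q "vec a" "vec U'" "vec b" "vec V'" "vec c" "vec W'"]
        tmul_tmul_lcons_right[of q "vec a" "vec U'" "vec b" "vec V'" "vec c" "vec W'"]
      unfolding U V W by (simp add: less U V W mult_assoc del: bilin_vec_vec tprod_Cons_Cons)
  qed
qed

lemma tmul_assoc: "tmul q (tmul q X Y) Z = tmul q X (tmul q Y Z)"
proof -
  have vec_vec: "tmul q (tmul q (vec U) (vec V)) Z = tmul q (vec U) (tmul q (vec V) Z)" for U V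
    by (rule pm_linear_eq_vec[where x = Z])
      (auto simp: pm_linear_def tmul_assoc_vec simp del: bilin_vec_vec)
  have vec: "tmul q (tmul q (vec U) Y) Z = tmul q (vec U) (tmul q Y Z)" for U
    by (rule pm_linear_eq_vec[where x = Y])
      (auto simp: pm_linear_def vec_vec simp del: bilin_vec_vec)
  show ?thesis
    by (rule pm_linear_eq_vec[where x = X]) (auto simp: pm_linear_def vec)
qed

end

section \<open>T^+(H) as an R_q-algebra generated by H\<close>

context mult_with_unit
begin

abbreviation tpmulv :: "'k rbq \<Rightarrow> ('b \<times> 'b list \<Rightarrow>\<^sub>0 'k) \<Rightarrow> ('b \<times> 'b list \<Rightarrow>\<^sub>0 'k)
    \<Rightarrow> ('b \<times> 'b list \<Rightarrow>\<^sub>0 'k)"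
  where "tpmulv q \<equiv> bilin (tpmul q m u)"

abbreviation tpPv :: "('b \<times> 'b list \<Rightarrow>\<^sub>0 'k) \<Rightarrow> ('b \<times> 'b list \<Rightarrow>\<^sub>0 'k)"
  where "tpPv \<equiv> lin (tpP u)"

lemma tpmulv_tens_tens: "tpmulv q (tens x X) (tens y Y) = tens (bilin m x y) (tmul q X Y)"
proof -
  have "(\<lambda>X Y. tpmulv q (tens (vec a) X) (tens (vec b) Y)) = (\<lambda>X Y. tens (m a b) (tmul q X Y))"
    for a b
    by (rule pm_bilinear_eq_vecI) (auto simp: pm_linear_def tpmul_def)
  then have "(\<lambda>x y. tpmulv q (tens x X) (tens y Y)) = (\<lambda>x y. tens (bilin m x y) (tmul q X Y))"
    by (intro pm_bilinear_eq_vecI) (auto simp: pm_linear_def fun_eq_iff)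
  then show ?thesis
    by (simp add: fun_eq_iff)
qed

lemma tpPv_tens: "tpPv (tens x X) = tens u (lcons x X)"
proof -
  have "tpPv (tens (vec a) X) = tens u (lcons (vec a) X)" for a
    by (rule pm_linear_eq_vec[where x = X]) (auto simp: pm_linear_def tpP_def)
  then show ?thesis
    by (rule pm_linear_eq_vec[where x = x, rotated 2])
      (auto simp: pm_linear_def simp del: tens_vec_vec)
qed

end

context unital_algebra
begin

lemma tpmulv_assoc: "tpmulv q (tpmulv q x y) z = tpmulv q x (tpmulv q y z)"
proof -
  have tens_tens:
    "tpmulv q (tpmulv q (tens a A) (tens b B)) z = tpmulv q (tens a A) (tpmulv q (tens b B) z)"
    for a A b B
    by (rule pm_linear_eq_tens[where p = z])
      (auto simp: pm_linear_def tpmulv_tens_tens mult_assoc tmul_assoc)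
  have tens: "tpmulv q (tpmulv q (tens a A) y) z = tpmulv q (tens a A) (tpmulv q y z)" for a A
    by (rule pm_linear_eq_tens[where p = y]) (auto simp: pm_linear_def tens_tens)
  show ?thesis
    by (rule pm_linear_eq_tens[where p = x]) (auto simp: pm_linear_def tens)
qed

lemma tpmulv_unit_left: "tpmulv q (tpunit u) x = x"
  unfolding tpunit_def
  by (rule pm_linear_eq_tens[where p = x]) (auto simp: pm_linear_def tpmulv_tens_tens)

lemma tpmulv_unit_right: "tpmulv q x (tpunit u) = x"
  unfolding tpunit_def
  by (rule pm_linear_eq_tens[where p = x]) (auto simp: pm_linear_def tpmulv_tens_tens)

lemma rq_identity_T_plus: "rq_identity q (tpmul q m u) (tpunit u) (tpP u)"
proof -
  have "(\<lambda>x y. tpmulv q (tpPv x) (tpPv y)) =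
        (\<lambda>x y. tpPv (tpmulv q (tpPv x) y + tpmulv q x (tpPv y)) +
          (case q of
             RB \<theta> \<Rightarrow> smul \<theta> (tpPv (tpmulv q x y))
           | Nij \<Rightarrow> - tpPv (tpPv (tpmulv q x y))
           | TD \<Rightarrow> - tpPv (tpmulv q (tpmulv q x (tpPv (tpunit u))) y)))"
    by (cases q; simp only: rbq.case; rule pm_bilinear_eq_tensI; (intro pm_linear_intros)?)
      (simp_all add: tpmulv_tens_tens tpPv_tens tmul_lcons_lcons Mq_def tpunit_def
        tmul_TD_lcons_unit_left tmul_TD_lcons_unit_right)
  then show ?thesis
    unfolding rq_identity_def mulv_eq_bilin by (simp add: fun_eq_iff)
qed

lemma is_Rq_algebra_T_plus: "is_Rq_algebra q (tpmul q m u) (tpunit u) (tpP u)"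
  using rq_identity_T_plus
  by (simp add: is_Rq_algebra_def mulv_eq_bilin tpmulv_assoc tpmulv_unit_left tpmulv_unit_right)

lemma vec_Cons_eq_tpmulv: "vec (a, b # W) = tpmulv q (vec (a, [])) (tpPv (vec (b, W)))"
proof -
  have "tpmulv q (vec (a, [])) (tpPv (vec (b, W))) =
        tpmulv q (tens (vec a) (vec [])) (tens u (vec (b # W)))"
    by (simp add: tpP_def)
  also have "\<dots> = vec (a, b # W)"
    by (simp only: tpmulv_tens_tens) simp
  finally show ?thesis by simp
qed

text \<open>The uniqueness half of freeness; by the previous lemma, T^+(H) is generated by i_H(H)
  under the product and P_H.\<close>

lemma T_plus_morphisms_eq:
  assumes f_mult: "\<And>x y. lin f (tpmulv q x y) = bilin Mt (lin f x) (lin f y)"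
    and f_op: "\<And>x. lin f (tpPv x) = lin Pt (lin f x)"
    and g_mult: "\<And>x y. lin g (tpmulv q x y) = bilin Mt (lin g x) (lin g y)"
    and g_op: "\<And>x. lin g (tpPv x) = lin Pt (lin g x)"
    and on_iH: "\<And>h. f (h, []) = g (h, [])"
  shows "f = g"
proof
  fix w
  show "f w = g w"
  proof (induction w rule: prod.induct)
    case (Pair a W)
    show ?case
    proof (induction W arbitrary: a)
      case Nil
      show ?case by (rule on_iH)
    next
      case (Cons b W)
      have "f (a, b # W) = lin f (vec (a, b # W))"
        by simp
      also have "\<dots> = lin f (tpmulv q (vec (a, [])) (tpPv (vec (b, W))))"
        by (subst vec_Cons_eq_tpmulv) (rule refl)
      also have "\<dots> = bilin Mt (f (a, [])) (lin Pt (f (b, W)))"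
        by (simp only: f_mult f_op) (simp only: lin_vec)
      also have "\<dots> = bilin Mt (g (a, [])) (lin Pt (g (b, W)))"
        by (simp only: on_iH Cons)
      also have "\<dots> = lin g (tpmulv q (vec (a, [])) (tpPv (vec (b, W))))"
        by (simp only: g_mult g_op) (simp only: lin_vec)
      also have "\<dots> = lin g (vec (a, b # W))"
        by (subst vec_Cons_eq_tpmulv) (rule refl)
      also have "\<dots> = g (a, b # W)"
        by simp
      finally show ?case .
    qed
  qed
qed

end

section \<open>Coassociativity and right counit of \<Delta>\<close>

definition id_tens_counit :: "('a \<Rightarrow> 'k::field) \<Rightarrow> 'a \<times> 'a \<Rightarrow> ('a \<Rightarrow>\<^sub>0 'k)" where
  "id_tens_counit e = (\<lambda>(x, y). smul (e y) (vec x))"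

lemma id_tens_counit_apply [simp]: "id_tens_counit e (x, y) = smul (e y) (vec x)"
  by (simp add: id_tens_counit_def)

lemma right_counit_iff: "right_counit D e \<longleftrightarrow> (\<forall>w. lin (id_tens_counit e) (D w) = vec w)"
  by (simp add: right_counit_def id_tens_counit_def)

lemma lin_id_tens_counit_tens: "lin (id_tens_counit e) (tens x y) = smul (linK e y) x"
proof -
  have "(\<lambda>x y. lin (id_tens_counit e) (tens x y)) = (\<lambda>x y. smul (linK e y) x)"
    by (rule pm_bilinear_eq_vecI) (auto simp: pm_linear_def smul_add_left mult.commute)
  then show ?thesis
    by (simp add: fun_eq_iff)
qed

lemma lin_id_tens_counit_bilin:
  assumes "\<And>x y. linK e (bilin M x y) = linK e x * linK e y"
  shows "lin (id_tens_counit e) (bilin (tensmul_pair M M) x y) =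
         bilin M (lin (id_tens_counit e) x) (lin (id_tens_counit e) y)"
proof -
  have "(\<lambda>x y. lin (id_tens_counit e) (bilin (tensmul_pair M M) x y)) =
        (\<lambda>x y. bilin M (lin (id_tens_counit e) x) (lin (id_tens_counit e) y))"
    by (rule pm_bilinear_eq_tensI)
      (auto simp: pm_linear_def bilin_tensmul_pair_tens lin_id_tens_counit_tens assms mult.commute
        smul_add_left)
  then show ?thesis
    by (simp add: fun_eq_iff)
qed

lemma lin_id_tens_counit_tensmap:
  "lin (id_tens_counit e) (lin (tensmap P vec) x) = lin P (lin (id_tens_counit e) x)"
proof -
  have "pm_linear (\<lambda>x. lin (id_tens_counit e) (lin (tensmap P vec) x))"
    by (simp add: pm_linear_def)
  then show ?thesis
    by (rule pm_linear_eq_tens) (auto simp: pm_linear_def lin_tensmap_tens lin_id_tens_counit_tens)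
qed

context unital_algebra
begin

lemma right_counit_T_plus:
  assumes D_mult: "\<And>x y. lin D (tpmulv q x y) =
                     bilin (tensmul_pair (tpmul q m u) (tpmul q m u)) (lin D x) (lin D y)"
    and D_op: "\<And>x. lin D (tpPv x) = lin (tensmap (tpP u) vec) (lin D x)"
    and D_iH: "\<And>h. lin D (iH h) = lin (tensmap iH iH) (cop h)"
    and e_mult: "\<And>x y. linK e (tpmulv q x y) = linK e x * linK e y"
    and e_iH: "\<And>h. linK e (iH h) = cou h"
    and cop_counit: "right_counit cop cou"
  shows "right_counit D e"
proof -
  let ?G = "id_tens_counit e"
  have "(\<lambda>w. lin ?G (D w)) = vec"
  proof (rule T_plus_morphisms_eq)
    show "lin (\<lambda>w. lin ?G (D w)) (tpmulv q x y) =
          tpmulv q (lin (\<lambda>w. lin ?G (D w)) x) (lin (\<lambda>w. lin ?G (D w)) y)" for x y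
      by (simp add: lin_lin[symmetric] D_mult lin_id_tens_counit_bilin e_mult)
    show "lin (\<lambda>w. lin ?G (D w)) (tpPv x) = tpPv (lin (\<lambda>w. lin ?G (D w)) x)" for x
      by (simp add: lin_lin[symmetric] D_op lin_id_tens_counit_tensmap)
    show "lin vec (tpmulv q x y) = tpmulv q (lin vec x) (lin vec y)"
      and "lin vec (tpPv x) = tpPv (lin vec x)" for x y
      by simp_all
    fix h
    have "lin ?G (D (h, [])) = lin ?G (lin (tensmap iH iH) (cop h))"
      using D_iH[of h] by (simp add: iH_def)
    also have "\<dots> = lin iH (lin (id_tens_counit cou) (cop h))"
      by (simp add: lin_lin) (rule lin_cong, auto simp: lin_id_tens_counit_tens e_iH)
    also have "\<dots> = vec (h, [])"
      using cop_counit by (simp add: right_counit_iff iH_def)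
    finally show "lin ?G (D (h, [])) = vec (h, [])" .
  qed
  then show ?thesis
    by (simp add: right_counit_iff fun_eq_iff)
qed

lemma coassoc_T_plus:
  assumes D_mult: "\<And>x y. lin D (tpmulv q x y) =
                     bilin (tensmul_pair (tpmul q m u) (tpmul q m u)) (lin D x) (lin D y)"
    and D_op: "\<And>x. lin D (tpPv x) = lin (tensmap (tpP u) vec) (lin D x)"
    and D_iH: "\<And>h. lin D (iH h) = lin (tensmap iH iH) (cop h)"
    and cop_coassoc: "coassoc cop"
  shows "coassoc D"
proof -
  let ?M = "tpmul q m u"
  define L where "L w = lin (tensmap D vec) (D w)" for w
  define R where "R w = lin tens_reassoc (lin (tensmap vec D) (D w))" for w
  have D_op_vec: "lin D (tpP u a) = lin (tensmap (tpP u) vec) (D a)" for a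
    using D_op[of "vec a"] by simp
  have "L = R"
  proof (rule T_plus_morphisms_eq[where Mt = "tensmul_pair (tensmul_pair ?M ?M) ?M"
        and Pt = "tensmap (tensmap (tpP u) vec) vec"])
    show "lin L (tpmulv q x y) =
          bilin (tensmul_pair (tensmul_pair ?M ?M) ?M) (lin L x) (lin L y)" for x y
      unfolding L_def lin_lin[symmetric] D_mult
      by (rule lin_tensmap_bilin_tensmul_pair) (simp_all add: D_mult)
    show "lin L (tpPv x) = lin (tensmap (tensmap (tpP u) vec) vec) (lin L x)" for x
      unfolding L_def lin_lin[symmetric] D_op
      by (simp add: lin_tensmap_lin_tensmap D_op_vec)
    show "lin R (tpmulv q x y) =
          bilin (tensmul_pair (tensmul_pair ?M ?M) ?M) (lin R x) (lin R y)" for x y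
    proof -
      have "lin (tensmap vec D) (lin D (tpmulv q x y)) =
            bilin (tensmul_pair ?M (tensmul_pair ?M ?M))
              (lin (tensmap vec D) (lin D x)) (lin (tensmap vec D) (lin D y))"
        unfolding D_mult by (rule lin_tensmap_bilin_tensmul_pair) (simp_all add: D_mult)
      then show ?thesis
        unfolding R_def lin_lin[symmetric] by (simp add: lin_tens_reassoc_bilin)
    qed
    show "lin R (tpPv x) = lin (tensmap (tensmap (tpP u) vec) vec) (lin R x)" for x
    proof -
      have "lin (tensmap vec D) (lin (tensmap (tpP u) vec) y) =
            lin (tensmap (tpP u) (tensmap vec vec)) (lin (tensmap vec D) y)" for y
        by (simp add: lin_tensmap_lin_tensmap)
      then show ?thesis
        unfolding R_def lin_lin[symmetric] D_op by (simp add: lin_tens_reassoc_tensmap)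
    qed
    fix h
    have "L (h, []) = lin (tensmap (tensmap iH iH) iH) (lin (tensmap cop vec) (cop h))"
      using D_iH by (simp add: L_def iH_def lin_tensmap_lin_tensmap)
    also have "\<dots> =
        lin (tensmap (tensmap iH iH) iH) (lin tens_reassoc (lin (tensmap vec cop) (cop h)))"
      using cop_coassoc by (simp add: coassoc_iff_tensmap)
    also have "\<dots> =
        lin tens_reassoc (lin (tensmap iH (tensmap iH iH)) (lin (tensmap vec cop) (cop h)))"
      by (simp only: lin_tens_reassoc_tensmap)
    also have "\<dots> = R (h, [])"
      using D_iH by (simp add: R_def iH_def lin_tensmap_lin_tensmap)
    finally show "L (h, []) = R (h, [])" .
  qed
  then show ?thesis
    by (simp add: coassoc_iff_tensmap L_def R_def fun_eq_iff)
qed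

end

lemma unital_algebra_if_comm_bialgebra:
  assumes "comm_bialgebra m u cop cou"
  shows "unital_algebra m u"
proof unfold_locales
  fix x y z
  show "bilin m (bilin m x y) z = bilin m x (bilin m y z)" "bilin m u x = x" "bilin m x u = x"
    using assms unfolding comm_bialgebra_def mulv_eq_bilin by blast+
qed

theorem theorem6p1:
  fixes m :: "'b \<Rightarrow> 'b \<Rightarrow> ('b \<Rightarrow>\<^sub>0 'k::field_char_0)"
    and u :: "'b \<Rightarrow>\<^sub>0 'k"
    and cop :: "'b \<Rightarrow> ('b \<times> 'b \<Rightarrow>\<^sub>0 'k)"
    and cou :: "'b \<Rightarrow> 'k"
    and q :: "'k rbq"
    and D :: "'b \<times> 'b list \<Rightarrow> (('b \<times> 'b list) \<times> ('b \<times> 'b list) \<Rightarrow>\<^sub>0 'k)"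
    and e :: "'b \<times> 'b list \<Rightarrow> 'k"
  assumes H: "comm_bialgebra m u cop cou"
    and D_mor: "Rq_morphism (tpmul q m u) (tpunit u) (tpP u)
                  (tensmul (tpmul q m u)) (tens (tpunit u) (tpunit u)) (tensop (tpP u)) D"
    and D_iH: "\<forall>h. lin D (iH h) = lin (tensmap iH iH) (cop h)"
    and e_mor: "Rq_morphism_K q (tpmul q m u) (tpunit u) (tpP u) e"
    and e_iH: "\<forall>h. linK e (iH h) = cou h"
  shows "coassoc D \<and> right_counit D e \<and>
         right_Rq_bialgebra q (tpmul q m u) (tpunit u) (tpP u) D e"
proof -
  interpret unital_algebra m u
    using H by (rule unital_algebra_if_comm_bialgebra)
  have D_mult: "\<And>x y. lin D (tpmulv q x y) =
                  bilin (tensmul_pair (tpmul q m u) (tpmul q m u)) (lin D x) (lin D y)"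
    and D_op: "\<And>x. lin D (tpPv x) = lin (tensmap (tpP u) vec) (lin D x)"
    using D_mor
    by (simp_all add: Rq_morphism_def mulv_eq_bilin tensmul_eq_tensmul_pair tensop_eq_tensmap)
  have e_mult: "\<And>x y. linK e (tpmulv q x y) = linK e x * linK e y"
    using e_mor by (simp add: Rq_morphism_K_def mulv_eq_bilin)
  have cop_coassoc: "coassoc cop" and cop_counit: "right_counit cop cou"
    using H by (simp_all add: comm_bialgebra_def)
  have "coassoc D"
    using D_iH by (intro coassoc_T_plus[OF D_mult D_op _ cop_coassoc]) blast
  moreover have "right_counit D e"
    using D_iH e_iH by (intro right_counit_T_plus[OF D_mult D_op _ e_mult _ cop_counit]) blast+
  ultimately show ?thesis
    using is_Rq_algebra_T_plus D_mor e_mor by (simp add: right_Rq_bialgebra_def)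
qed

end
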